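(* Let $q$ be odd with characteristic $p$, and let $n\ge 2$. The number $K(n,q)$ of vectors $x \in \mathbb{F}_q^n$ with $(x,x) = 0$ and $(x,\mathbf{1}) \neq 0$ is \[ K(n,q) = \begin{cases} q^{n-2}(q-1), & p \mid n,\\ q^{n-2}(q-1) - \chi((-1)^{(n-1)/2}n)(q-1)q^{(n-3)/2}, & p\nmid n,\ n\text{ odd},\\ q^{n-2}(q-1) + \chi((-1)^{n/2})(q-1)q^{(n-2)/2}, & p\nmid n,\ n \text{ even}.\end{cases} \]
   Context: $(x,y) = \sum_i x_iy_i$ is the standard inner product, $\mathbf{1}$ the all-ones vector, and $\chi$ the quadratic character of $\mathbb{F}_q$ ($\chi(a)=1$ for nonzero squares, $-1$ for nonsquares, $\chi(0)=0$); $n$ is viewed as an element of $\mathbb{F}_q$ inside $\chi$. *)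

theory Defs
  imports Main
begin

definition qchar :: "'a::field \<Rightarrow> int" where
  "qchar a = (if a = 0 then 0 else if (\<exists>b. b * b = a) then 1 else -1)"

definition ip :: "'a::comm_ring list \<Rightarrow> 'a list \<Rightarrow> 'a" where
  "ip xs ys = sum_list (map2 (*) xs ys)"

definition K :: "nat \<Rightarrow> 'a::{finite,field} itself \<Rightarrow> nat" where
  "K n _ = card {xs :: 'a list. length xs = n \<and> ip xs xs = 0 \<and> ip xs (replicate n 1) \<noteq> 0}"

end

(*
  Write N_n(c) for the number of x in F_q^n with (x, x) = c.  Vectors with (x, 1) <> 0 fall
  into classes according to the ratio r = (x, x) / (x, 1).  Scaling x shows that all classes
  with r <> 0 have the same size, and the substitution x = y - 1 identifies the class r = 2,
  together with the vectors with (x, x) = (x, 1) = 0, with the sphere (x, x) = n.  Counting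
  all vectors with (x, 1) <> 0 then gives

    q K(n, q) = q^n - q^(n-1) + (q - 1) (N_n(0) - N_n(n)).

  Splitting off two coordinates, and using that u^2 + v^2 takes every nonzero value exactly
  q - chi(-1) times (the norm form of F_q[i] is onto and multiplicative), yields
  N_(n+2)(0) - N_(n+2)(c) = q chi(-1) (N_n(0) - N_n(c)), which is solved explicitly from
  N_0(c) = [c = 0] and N_1(c) = 1 + chi(c).
*)
theory Submission
  imports Defs "HOL-Library.Cardinality" "HOL-Number_Theory.Residues"
begin

lemma qchar_one [simp]: "qchar 1 = 1"
  unfolding qchar_def by (metis mult_1 one_neq_zero)

lemma qchar_mult_square:
  fixes c v :: "'a::field"
  assumes "v \<noteq> 0"
  shows "qchar (c * (v * v)) = qchar c"
proof -
  have "(\<exists>b. b * b = c * (v * v)) \<longleftrightarrow> (\<exists>b. b * b = c)"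
  proof
    assume "\<exists>b. b * b = c * (v * v)"
    then obtain b where "b * b = c * (v * v)" by blast
    then have "(b / v) * (b / v) = c" using assms by (simp add: field_simps)
    then show "\<exists>b. b * b = c" by blast
  next
    assume "\<exists>b. b * b = c"
    then obtain b where "b * b = c" by blast
    then have "(b * v) * (b * v) = c * (v * v)" by (simp add: algebra_simps)
    then show "\<exists>b. b * b = c * (v * v)" by blast
  qed
  then show ?thesis using assms by (simp add: qchar_def)
qed

lemma card_eq_mult_card_image:
  assumes "finite A" and "\<And>x. x \<in> A \<Longrightarrow> card {y \<in> A. f y = f x} = k"
  shows "card A = k * card (f ` A)"
proof -
  have "card A = (\<Sum>y\<in>f ` A. card {x \<in> A. f x = y})"
    using sum.image_gen[OF assms(1), of "\<lambda>_. 1::nat" f] by simp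
  also have "\<dots> = (\<Sum>y\<in>f ` A. k)"
    by (rule sum.cong) (auto simp: assms(2))
  finally show ?thesis by simp
qed

lemma two_neq_zero_if_odd_card:
  assumes "odd (card (UNIV :: 'a::{finite,field} set))"
  shows "(2::'a) \<noteq> 0"
proof
  assume "(2::'a) = 0"
  then have "CHAR('a) dvd 2"
    using of_nat_eq_0_iff_char_dvd[where 'a='a, of 2] by simp
  moreover have "CHAR('a) \<noteq> 1"
    using of_nat_CHAR[where 'a='a] by auto
  ultimately have "CHAR('a) = 2"
    using prime_nat_iff[of 2] by auto
  then show False
    using CHAR_dvd_CARD[where 'a='a] assms by simp
qed

lemma ip_Nil [simp]: "ip [] ys = 0"
  unfolding ip_def by simp

lemma ip_Cons [simp]: "ip (x # xs) (y # ys) = x * y + ip xs ys"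
  unfolding ip_def by simp

lemma ip_replicate_one:
  "length xs = n \<Longrightarrow> ip xs (replicate n (1::'a::comm_ring_1)) = sum_list xs"
  by (induction xs arbitrary: n) auto

lemma ip_map_mult:
  "ip (map ((*) l) xs) (map ((*) l) xs) = l * l * ip xs (xs :: 'a::comm_ring list)"
  by (induction xs) (auto simp: algebra_simps)

lemma ip_map_add_const:
  "ip (map (\<lambda>t. t + c) xs) (map (\<lambda>t. t + c) xs)
     = ip xs xs + 2 * c * sum_list xs + of_nat (length xs) * c * (c :: 'a::comm_ring_1)"
  by (induction xs) (auto simp: algebra_simps)

lemma sum_list_map_add_const:
  "sum_list (map (\<lambda>t. t + c) xs)
     = sum_list xs + of_nat (length xs) * (c :: 'a::comm_ring_1)"
  by (induction xs) (auto simp: algebra_simps)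

definition sq_reps :: "nat \<Rightarrow> 'a::{finite,field} \<Rightarrow> int" where
  "sq_reps n c = int (card {xs. length xs = n \<and> ip xs xs = c})"

lemma sq_reps_0: "sq_reps 0 c = of_bool (c = 0)"
proof -
  have "{xs. length xs = 0 \<and> ip xs xs = c} = (if c = 0 then {[]} else {})" by auto
  then show ?thesis unfolding sq_reps_def by simp
qed

lemma sq_reps_Suc: "sq_reps (Suc n) c = (\<Sum>t\<in>UNIV. sq_reps n (c - t * t))"
proof -
  let ?S = "SIGMA t:UNIV. {ys. length ys = n \<and> ip ys ys = c - t * t}"
  have "{xs. length xs = Suc n \<and> ip xs xs = c} = (\<lambda>(t, ys). t # ys) ` ?S"
    by (auto simp: length_Suc_conv algebra_simps)
  moreover have "inj_on (\<lambda>(t, ys). t # ys) ?S"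
    by (auto simp: inj_on_def)
  ultimately have "card {xs. length xs = Suc n \<and> ip xs xs = c} = card ?S"
    by (simp add: card_image)
  then show ?thesis
    unfolding sq_reps_def by (simp add: finite_list_length)
qed

lemma sum_sq_reps: "(\<Sum>c\<in>UNIV. sq_reps n (c :: 'a::{finite,field})) = int CARD('a) ^ n"
proof -
  have "(\<Sum>c::'a\<in>UNIV. card {xs \<in> {xs. length xs = n}. ip xs xs = c})
      = card {xs::'a list. length xs = n}"
    using sum.group[of "{xs::'a list. length xs = n}" UNIV "\<lambda>xs. ip xs xs" "\<lambda>_. 1::nat"]
    by (simp add: finite_list_length)
  then show ?thesis
    unfolding sq_reps_def using card_lists_length_eq[of "UNIV :: 'a set" n]
    by (simp flip: of_nat_sum)
qed

lemma sq_reps_add: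
  "sq_reps (m + n) c = (\<Sum>a\<in>UNIV. sq_reps m a * sq_reps n (c - a))"
proof (induction m arbitrary: c)
  case 0
  then show ?case by (simp add: sq_reps_0)
next
  case (Suc m)
  have "sq_reps (Suc m + n) c
      = (\<Sum>t\<in>UNIV. \<Sum>a\<in>UNIV. sq_reps m a * sq_reps n (c - t * t - a))"
    by (simp add: sq_reps_Suc Suc.IH)
  also have "\<dots> = (\<Sum>t\<in>UNIV. \<Sum>a\<in>UNIV. sq_reps m (a - t * t) * sq_reps n (c - a))"
  proof (rule sum.cong[OF refl])
    fix t :: 'a
    show "(\<Sum>a\<in>UNIV. sq_reps m a * sq_reps n (c - t * t - a))
        = (\<Sum>a\<in>UNIV. sq_reps m (a - t * t) * sq_reps n (c - a))"
      using sum.reindex_bij_betw[OF bij_diff_right[of "t * t"],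
          of "\<lambda>a. sq_reps m a * sq_reps n (c - t * t - a)"] by simp
  qed
  also have "\<dots> = (\<Sum>a\<in>UNIV. sq_reps (Suc m) a * sq_reps n (c - a))"
    by (subst sum.swap) (simp add: sq_reps_Suc sum_distrib_right)
  finally show ?case .
qed

lemma sq_reps_2: "sq_reps 2 c = int (card {(u, v). u * u + v * v = c})"
proof -
  have "{xs. length xs = 2 \<and> ip xs xs = c}
      = (\<lambda>(u, v). [u, v]) ` {(u, v). u * u + v * v = c}"
    by (auto simp: numeral_2_eq_2 length_Suc_conv)
  moreover have "inj (\<lambda>(u::'a, v). [u, v])"
    by (auto simp: inj_on_def)
  ultimately show ?thesis
    unfolding sq_reps_def by (simp add: card_image inj_on_subset)
qed

text \<open>Multiplying \<open>u + iv\<close> by \<open>s + it\<close> in \<open>F[i]\<close>, \<open>i\<^sup>2 = -1\<close>, multiplies norms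
  by \<open>s\<^sup>2 + t\<^sup>2\<close>.\<close>
lemma sq_reps_2_mult_norm:
  fixes s t :: "'a::{finite,field}"
  assumes "s * s + t * t \<noteq> 0"
  shows "sq_reps 2 (c * (s * s + t * t)) = sq_reps 2 c"
proof -
  define w where "w = s * s + t * t"
  have "w \<noteq> 0" using assms unfolding w_def .
  define f where "f = (\<lambda>(u, v). (u * s - v * t, u * t + v * s))"
  define g where "g = (\<lambda>(x, y). ((x * s + y * t) / w, (y * s - x * t) / w))"
  have gf: "g (f (u, v)) = (u, v)" for u v
  proof -
    have "(u * s - v * t) * s + (u * t + v * s) * t = u * w"
      and "(u * t + v * s) * s - (u * s - v * t) * t = v * w"
      unfolding w_def by (simp_all add: algebra_simps)
    then show ?thesis using \<open>w \<noteq> 0\<close> unfolding f_def g_def by (simp add: field_simps)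
  qed
  have fg: "f (g (x, y)) = (x, y)" for x y
    using \<open>w \<noteq> 0\<close> unfolding f_def g_def
    by (simp add: field_simps) (simp add: w_def algebra_simps)
  have f_norm:
    "fst (f p) * fst (f p) + snd (f p) * snd (f p) = (fst p * fst p + snd p * snd p) * w" for p
    unfolding f_def w_def by (simp add: case_prod_beta algebra_simps)
  have "bij_betw f {(u, v). u * u + v * v = c} {(x, y). x * x + y * y = c * w}"
  proof (rule bij_betw_byWitness[where f' = g])
    show "\<forall>p \<in> {(u, v). u * u + v * v = c}. g (f p) = p"
      using gf by auto
    show "\<forall>p \<in> {(x, y). x * x + y * y = c * w}. f (g p) = p"
      using fg by auto
    show "f ` {(u, v). u * u + v * v = c} \<subseteq> {(x, y). x * x + y * y = c * w}"
    proof (rule image_subsetI)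
      fix p assume "p \<in> {(u, v). u * u + v * v = c}"
      then show "f p \<in> {(x, y). x * x + y * y = c * w}"
        using f_norm[of p] by (simp add: case_prod_beta)
    qed
    show "g ` {(x, y). x * x + y * y = c * w} \<subseteq> {(u, v). u * u + v * v = c}"
    proof (rule image_subsetI)
      fix p assume "p \<in> {(x, y). x * x + y * y = c * w}"
      then show "g p \<in> {(u, v). u * u + v * v = c}"
        using f_norm[of "g p"] fg[of "fst p" "snd p"] \<open>w \<noteq> 0\<close>
        by (simp add: case_prod_beta)
    qed
  qed
  then show ?thesis
    unfolding sq_reps_2 w_def by (simp add: bij_betw_same_card)
qed

lemma card_sum_list_nonzero:
  "int (card {xs::'a::{finite,field} list. length xs = Suc m \<and> sum_list xs \<noteq> 0})
     = int CARD('a) ^ Suc m - int CARD('a) ^ m"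
proof -
  let ?A = "{xs::'a list. length xs = Suc m}"
  let ?Z = "{xs::'a list. length xs = Suc m \<and> sum_list xs = 0}"
  have "?Z = (\<lambda>ys. (- sum_list ys) # ys) ` {ys. length ys = m}"
    by (auto simp: length_Suc_conv add_eq_0_iff2)
  moreover have "inj (\<lambda>ys::'a list. (- sum_list ys) # ys)"
    by (auto simp: inj_on_def)
  ultimately have "card ?Z = CARD('a) ^ m"
    using card_lists_length_eq[of "UNIV :: 'a set" m] by (simp add: card_image inj_on_subset)
  moreover have "card ?A = CARD('a) ^ Suc m"
    using card_lists_length_eq[of "UNIV :: 'a set"] by simp
  moreover have "{xs. length xs = Suc m \<and> sum_list xs \<noteq> 0} = ?A - ?Z" and "?Z \<subseteq> ?A"
    by auto
  ultimately show ?thesis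
    by (simp add: card_Diff_subset finite_list_length of_nat_diff card_mono)
qed

definition ratio_vecs :: "nat \<Rightarrow> 'a::{finite,field} \<Rightarrow> 'a list set" where
  "ratio_vecs n r = {xs. length xs = n \<and> sum_list xs \<noteq> 0 \<and> ip xs xs = r * sum_list xs}"

lemma K_eq_card_ratio_vecs: "K n (F :: 'a itself) = card (ratio_vecs n (0::'a::{finite,field}))"
  unfolding K_def ratio_vecs_def by (metis (lifting) ip_replicate_one mult_zero_left)

lemma card_ratio_vecs_eq:
  fixes r s :: "'a::{finite,field}"
  assumes "r \<noteq> 0" and "s \<noteq> 0"
  shows "card (ratio_vecs n r) = card (ratio_vecs n s)"
proof -
  have "bij_betw (map ((*) (s / r))) (ratio_vecs n r) (ratio_vecs n s)"
  proof (rule bij_betw_byWitness[where f' = "map ((*) (r / s))"])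
    show "\<forall>xs \<in> ratio_vecs n r. map ((*) (r / s)) (map ((*) (s / r)) xs) = xs"
      using assms by (simp add: map_idI)
    show "\<forall>xs \<in> ratio_vecs n s. map ((*) (s / r)) (map ((*) (r / s)) xs) = xs"
      using assms by (simp add: map_idI)
    show "map ((*) (s / r)) ` ratio_vecs n r \<subseteq> ratio_vecs n s"
      using assms by (auto simp: ratio_vecs_def ip_map_mult sum_list_const_mult)
    show "map ((*) (r / s)) ` ratio_vecs n s \<subseteq> ratio_vecs n r"
      using assms by (auto simp: ratio_vecs_def ip_map_mult sum_list_const_mult)
  qed
  then show ?thesis by (rule bij_betw_same_card)
qed

text \<open>Substituting \<open>x = y - \<one>\<close> turns \<open>(x, x) = n\<close> into \<open>(y, y) = 2 (y, \<one>)\<close>.\<close>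
lemma sq_reps_of_nat_length:
  "sq_reps n (of_nat n :: 'a::{finite,field})
     = int (card {xs::'a list. length xs = n \<and> ip xs xs = 2 * sum_list xs})"
proof -
  let ?S = "{xs::'a list. length xs = n \<and> ip xs xs = of_nat n}"
  let ?T = "{xs::'a list. length xs = n \<and> ip xs xs = 2 * sum_list xs}"
  have "bij_betw (map (\<lambda>t. t + 1)) ?S ?T"
  proof (rule bij_betw_byWitness[where f' = "map (\<lambda>t. t - 1)"])
    show "\<forall>xs \<in> ?S. map (\<lambda>t. t - 1) (map (\<lambda>t. t + 1) xs) = xs"
      by (simp add: map_idI)
    show "\<forall>xs \<in> ?T. map (\<lambda>t. t + 1) (map (\<lambda>t. t - 1) xs) = xs"
      by (simp add: map_idI)
    show "map (\<lambda>t. t + 1) ` ?S \<subseteq> ?T"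
      by (auto simp: ip_map_add_const sum_list_map_add_const algebra_simps)
    show "map (\<lambda>t. t - 1) ` ?T \<subseteq> ?S"
    proof (rule image_subsetI)
      fix xs assume "xs \<in> ?T"
      then show "map (\<lambda>t. t - 1) xs \<in> ?S"
        using ip_map_add_const[where c = "- 1 :: 'a" and xs = xs] by (simp add: algebra_simps)
    qed
  qed
  then show ?thesis
    unfolding sq_reps_def by (simp add: bij_betw_same_card)
qed

lemma card_ratio_vecs_0_minus_2:
  "int (card (ratio_vecs n (0::'a::{finite,field}))) - int (card (ratio_vecs n (2::'a)))
     = sq_reps n (0::'a) - sq_reps n (of_nat n :: 'a)"
proof -
  define Z where "Z = {xs::'a list. length xs = n \<and> ip xs xs = 0 \<and> sum_list xs = 0}"
  have fin: "finite Z" "finite (ratio_vecs n r)" for r :: 'a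
    unfolding Z_def ratio_vecs_def by (auto intro: rev_finite_subset[OF finite_list_length])
  have "{xs::'a list. length xs = n \<and> ip xs xs = 0} = Z \<union> ratio_vecs n 0"
    and "Z \<inter> ratio_vecs n 0 = {}"
    unfolding Z_def ratio_vecs_def by auto
  then have "sq_reps n (0::'a) = int (card Z) + int (card (ratio_vecs n (0::'a)))"
    unfolding sq_reps_def using fin by (simp add: card_Un_disjoint)
  moreover have "{xs::'a list. length xs = n \<and> ip xs xs = 2 * sum_list xs} = Z \<union> ratio_vecs n 2"
    and "Z \<inter> ratio_vecs n 2 = {}"
    unfolding Z_def ratio_vecs_def by auto
  then have "sq_reps n (of_nat n :: 'a) = int (card Z) + int (card (ratio_vecs n (2::'a)))"
    unfolding sq_reps_of_nat_length using fin by (simp add: card_Un_disjoint)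
  ultimately show ?thesis by simp
qed

lemma one_less_card_field: "1 < CARD('a::{finite,field})"
proof -
  have "card {0::'a, 1} \<le> CARD('a)"
    by (rule card_mono) auto
  then show ?thesis by simp
qed

context
  assumes two_neq_zero: "(2::'a::{finite,field}) \<noteq> 0"
begin

lemma neg_neq_self: "x \<noteq> 0 \<Longrightarrow> - x \<noteq> (x::'a)"
  using two_neq_zero by (metis add_eq_0_iff2 mult_2 mult_eq_0_iff)

lemma card_nonzero_squares: "2 * card {y::'a. y \<noteq> 0 \<and> (\<exists>b. b * b = y)} = CARD('a) - 1"
proof -
  have "{y::'a. y \<noteq> 0 \<and> (\<exists>b. b * b = y)} = (\<lambda>x. x * x) ` (UNIV - {0})"
    by auto
  moreover have "card (UNIV - {0::'a}) = 2 * card ((\<lambda>x. x * x) ` (UNIV - {0::'a}))"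
  proof (rule card_eq_mult_card_image)
    fix x :: 'a
    assume "x \<in> UNIV - {0}"
    moreover have "{y \<in> UNIV - {0}. y * y = x * x} = {x, - x} - {0}"
      by (auto simp: square_eq_iff)
    ultimately show "card {y \<in> UNIV - {0}. y * y = x * x} = 2"
      using neg_neq_self[of x] by auto
  qed simp
  ultimately show ?thesis
    by (simp add: card_Diff_singleton)
qed

lemma card_square_roots: "int (card {t::'a. t * t = c}) = 1 + qchar c"
proof (cases "\<exists>b. b * b = c")
  case True
  then obtain b where b: "b * b = c" by blast
  then have roots: "{t. t * t = c} = {b, - b}"
    by (auto simp: square_eq_iff)
  show ?thesis
  proof (cases "b = 0")
    case True
    then show ?thesis using b roots by (simp add: qchar_def)
  next
    case False
    then show ?thesis using b roots neg_neq_self[of b] by (auto simp: qchar_def)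
  qed
next
  case False
  then have "{t. t * t = c} = {}"
    by auto
  moreover have "c \<noteq> 0"
    using False mult_zero_left by metis
  ultimately show ?thesis
    using False by (simp add: qchar_def)
qed

text \<open>The inclusion is an equality because both sets have \<open>(q - 1) / 2\<close> elements.\<close>
lemma nonsquare_mult_nonzero_squares:
  assumes "a \<noteq> 0" and "\<nexists>b. b * b = a"
  shows "(\<lambda>x. a * x) ` {y::'a. y \<noteq> 0 \<and> (\<exists>b. b * b = y)} = {y. y \<noteq> 0 \<and> \<not> (\<exists>b. b * b = y)}"
    (is "?f ` ?S = ?N")
proof (rule card_subset_eq)
  show "?f ` ?S \<subseteq> ?N"
  proof (rule image_subsetI)
    fix y assume "y \<in> ?S"
    then obtain s where s: "s \<noteq> 0" "y = s * s" by auto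
    have "\<not> (\<exists>b. b * b = a * y)"
    proof
      assume "\<exists>b. b * b = a * y"
      then obtain b where "b * b = a * y" by blast
      then have "(b / s) * (b / s) = a" using s by (simp add: field_simps)
      with assms(2) show False by blast
    qed
    then show "a * y \<in> ?N" using assms(1) s by simp
  qed
  have "?N = (UNIV - {0}) - ?S" and "?S \<subseteq> UNIV - {0}"
    by auto
  then have "card ?N = card ?S"
    using card_nonzero_squares by (simp add: card_Diff_subset card_Diff_singleton)
  moreover have "card (?f ` ?S) = card ?S"
    using assms(1) by (intro card_image) (auto simp: inj_on_def)
  ultimately show "card (?f ` ?S) = card ?N" by simp
qed simp

lemma qchar_mult: "qchar (a * b) = qchar a * qchar (b::'a)"
proof -
  have square: "qchar (s * s * c) = qchar c" if "s \<noteq> 0" for s c :: 'a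
    using qchar_mult_square[OF that, of c] by (simp add: mult.commute)
  consider "a = 0 \<or> b = 0"
    | s where "s \<noteq> 0" "a = s * s"
    | s where "s \<noteq> 0" "b = s * s"
    | "a \<noteq> 0" "b \<noteq> 0" "\<nexists>s. s * s = a" "\<nexists>s. s * s = b"
    by (metis mult_zero_left)
  then show ?thesis
  proof cases
    case 1
    then show ?thesis by (auto simp: qchar_def)
  next
    case 2
    then show ?thesis using square[of s b] square[of s 1] by simp
  next
    case 3
    then show ?thesis using square[of s a] square[of s 1] by (simp add: mult.commute)
  next
    case 4
    then have "b \<in> (\<lambda>x. a * x) ` {y. y \<noteq> 0 \<and> (\<exists>b. b * b = y)}"
      using nonsquare_mult_nonzero_squares by blast
    then obtain s where "b = a * (s * s)" by blast
    then have "(a * s) * (a * s) = a * b" by (simp add: algebra_simps)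
    then have "\<exists>c. c * c = a * b" by blast
    moreover have "a * b \<noteq> 0" using 4 by simp
    ultimately show ?thesis using 4 unfolding qchar_def by simp
  qed
qed

lemma qchar_power: "qchar (a ^ k) = qchar (a::'a) ^ k"
  by (induction k) (simp_all add: qchar_mult)

text \<open>Pigeonhole: the sets \<open>{u\<^sup>2}\<close> and \<open>{a - v\<^sup>2}\<close> both have \<open>(q + 1) / 2\<close> elements.\<close>
lemma sum_two_squares_exists: "\<exists>u v::'a. u * u + v * v = a"
proof -
  define A where "A = range (\<lambda>u::'a. u * u)"
  define B where "B = (\<lambda>y. a - y) ` A"
  have "A = insert 0 {y. y \<noteq> 0 \<and> (\<exists>b. b * b = y)}"
    unfolding A_def by auto
  then have "2 * card A = CARD('a) + 1"
    using card_nonzero_squares card_ge_0_finite[of "UNIV :: 'a set"] by simp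
  moreover have "card B = card A"
    unfolding B_def by (rule card_image) (auto simp: inj_on_def)
  moreover have "card (A \<union> B) \<le> CARD('a)"
    by (rule card_mono) auto
  moreover have "card A + card B = card (A \<union> B) + card (A \<inter> B)"
    by (rule card_Un_Int) auto
  ultimately have "A \<inter> B \<noteq> {}" by auto
  then obtain u v where "u * u = a - v * v"
    unfolding A_def B_def by auto
  then show ?thesis by (metis diff_add_cancel)
qed

lemma sq_reps_1: "sq_reps 1 c = 1 + qchar (c::'a)"
proof -
  have "sq_reps 1 c = (\<Sum>t\<in>UNIV. sq_reps 0 (c - t * t))"
    using sq_reps_Suc[of 0 c] by simp
  also have "\<dots> = (\<Sum>t\<in>UNIV. of_bool (t * t = c))"
    by (intro sum.cong refl) (auto simp: sq_reps_0)
  also have "\<dots> = int (card {t. t * t = c})"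
    by simp
  finally show ?thesis by (simp add: card_square_roots)
qed

lemma sq_reps_2_zero: "sq_reps 2 (0::'a) = int CARD('a) + (int CARD('a) - 1) * qchar (- 1 :: 'a)"
proof -
  have "sq_reps 2 (0::'a) = (\<Sum>u\<in>UNIV. sq_reps 1 (0 - u * (u::'a)))"
    using sq_reps_Suc[of 1 "0::'a"] by (simp only: Suc_1)
  also have "\<dots> = (\<Sum>u\<in>UNIV. 1 + qchar (- 1 * (u * (u::'a))))"
    by (simp only: sq_reps_1) simp
  also have "\<dots> = int CARD('a) + (\<Sum>u\<in>UNIV. qchar (- 1 * (u * (u::'a))))"
    by (simp add: sum.distrib)
  also have "(\<Sum>u\<in>UNIV. qchar (- 1 * (u * (u::'a))))
      = (\<Sum>u\<in>UNIV - {0::'a}. qchar (- 1 * (u * u)))"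
    by (rule sum.mono_neutral_right) (auto simp: qchar_def)
  also have "\<dots> = (\<Sum>u\<in>UNIV - {0::'a}. qchar (- 1 :: 'a))"
    by (rule sum.cong) (simp_all add: qchar_mult_square[where c = "- 1", simplified])
  finally show ?thesis
    using one_less_card_field[where 'a='a] by (simp add: card_Diff_singleton of_nat_diff)
qed

lemma sq_reps_2_nonzero:
  assumes "(c::'a) \<noteq> 0"
  shows "sq_reps 2 c = int CARD('a) - qchar (- 1 :: 'a)"
proof -
  let ?q = "int CARD('a)"
  have const: "sq_reps 2 a = sq_reps 2 (1::'a)" if "a \<noteq> 0" for a :: 'a
  proof -
    obtain s t where "s * s + t * t = a" using sum_two_squares_exists by blast
    then show ?thesis using sq_reps_2_mult_norm[of s t 1] that by simp
  qed
  have "?q ^ 2 = (\<Sum>a\<in>UNIV. sq_reps 2 (a::'a))"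
    by (rule sum_sq_reps[symmetric])
  also have "\<dots> = sq_reps 2 (0::'a) + (\<Sum>a\<in>UNIV - {0}. sq_reps 2 (a::'a))"
    by (rule sum.remove) auto
  also have "(\<Sum>a\<in>UNIV - {0::'a}. sq_reps 2 a)
      = (\<Sum>a\<in>UNIV - {0::'a}. sq_reps 2 (1::'a))"
    by (intro sum.cong refl const) simp
  finally have "(?q - 1) * sq_reps 2 (1::'a) = (?q - 1) * (?q - qchar (- 1 :: 'a))"
    using one_less_card_field[where 'a='a]
    by (simp add: sq_reps_2_zero card_Diff_singleton of_nat_diff algebra_simps power2_eq_square)
  then show ?thesis
    using one_less_card_field[where 'a='a] const[OF assms] by simp
qed

lemma sq_reps_add_two:
  "sq_reps (n + 2) c = (int CARD('a) - qchar (- 1 :: 'a)) * int CARD('a) ^ n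
     + int CARD('a) * qchar (- 1 :: 'a) * sq_reps n (c::'a)"
proof -
  let ?q = "int CARD('a)" and ?e = "qchar (- 1 :: 'a)"
  have "sq_reps (n + 2) c = (\<Sum>a\<in>UNIV. sq_reps 2 a * sq_reps n (c - a))"
    using sq_reps_add[of 2 n c] by (simp add: add.commute)
  also have "\<dots> = (\<Sum>a\<in>UNIV. (?q - ?e) * sq_reps n (c - a)
                          + of_bool (a = 0) * (?q * ?e * sq_reps n (c - a)))"
    by (rule sum.cong) (auto simp: sq_reps_2_zero sq_reps_2_nonzero algebra_simps)
  also have "\<dots> = (?q - ?e) * (\<Sum>a\<in>UNIV. sq_reps n (c - a)) + ?q * ?e * sq_reps n c"
    by (simp add: sum.distrib sum_distrib_left)
  also have "(\<Sum>a\<in>UNIV. sq_reps n (c - a)) = ?q ^ n"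
    using sum.reindex_bij_betw[OF bij_diff[of c], of "sq_reps n"] sum_sq_reps[of n] by simp
  finally show ?thesis .
qed

lemma sq_reps_defect_add_two:
  "sq_reps (n + 2) (0::'a) - sq_reps (n + 2) (c::'a)
     = int CARD('a) * qchar (- 1 :: 'a) * (sq_reps n (0::'a) - sq_reps n c)"
  using sq_reps_add_two[of n 0] sq_reps_add_two[of n c] by (simp add: algebra_simps)

lemma sq_reps_defect_even:
  assumes "(c::'a) \<noteq> 0"
  shows "sq_reps (2 * k) (0::'a) - sq_reps (2 * k) c = (int CARD('a) * qchar (- 1 :: 'a)) ^ k"
proof (induction k)
  case 0
  then show ?case using assms by (simp add: sq_reps_0)
next
  case (Suc k)
  have "2 * Suc k = 2 * k + 2" by simp
  then show ?case using Suc sq_reps_defect_add_two[of "2 * k" c] by (simp only:) simp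
qed

lemma sq_reps_defect_odd:
  assumes "(c::'a) \<noteq> 0"
  shows "sq_reps (2 * k + 1) (0::'a) - sq_reps (2 * k + 1) c
           = - ((int CARD('a) * qchar (- 1 :: 'a)) ^ k * qchar c)"
proof (induction k)
  case 0
  then show ?case using sq_reps_1[of 0] sq_reps_1[of c] by (simp add: qchar_def)
next
  case (Suc k)
  have "2 * Suc k + 1 = (2 * k + 1) + 2" by simp
  then show ?case using Suc sq_reps_defect_add_two[of "2 * k + 1" c] by (simp only:) simp
qed

lemma card_sum_list_nonzero_by_ratio:
  "int (card {xs::'a list. length xs = n \<and> sum_list xs \<noteq> 0})
     = int (card (ratio_vecs n (0::'a))) + (int CARD('a) - 1) * int (card (ratio_vecs n (2::'a)))"
proof -
  let ?S = "{xs::'a list. length xs = n \<and> sum_list xs \<noteq> 0}"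
  have "finite ?S"
    by (rule rev_finite_subset[OF finite_list_length[of n]]) auto
  then have "card ?S = (\<Sum>r\<in>UNIV. card {xs \<in> ?S. ip xs xs / sum_list xs = r})"
    using sum.group[of ?S UNIV "\<lambda>xs. ip xs xs / sum_list xs" "\<lambda>_. 1::nat"] by simp
  also have "\<dots> = (\<Sum>r\<in>UNIV. card (ratio_vecs n (r::'a)))"
    by (rule sum.cong) (auto simp: ratio_vecs_def field_simps intro!: arg_cong[where f = card])
  also have "\<dots> = card (ratio_vecs n (0::'a)) + (\<Sum>r\<in>UNIV - {0::'a}. card (ratio_vecs n r))"
    by (rule sum.remove) auto
  also have "(\<Sum>r\<in>UNIV - {0::'a}. card (ratio_vecs n r))
      = (\<Sum>r\<in>UNIV - {0::'a}. card (ratio_vecs n (2::'a)))"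
    by (intro sum.cong refl card_ratio_vecs_eq two_neq_zero) simp
  finally show ?thesis
    using one_less_card_field[where 'a='a] by (simp add: card_Diff_singleton of_nat_diff)
qed

lemma K_recursion:
  "int (K (m + 2) (F :: 'a itself)) = int CARD('a) ^ m * (int CARD('a) - 1)
     + (int CARD('a) - 1) * qchar (- 1 :: 'a)
       * (sq_reps m (0::'a) - sq_reps m (of_nat (m + 2) :: 'a))"
proof -
  let ?q = "int CARD('a)" and ?e = "qchar (- 1 :: 'a)"
  let ?D = "sq_reps m (0::'a) - sq_reps m (of_nat (m + 2) :: 'a)"
  let ?E0 = "int (card (ratio_vecs (m + 2) (0::'a)))"
  let ?E2 = "int (card (ratio_vecs (m + 2) (2::'a)))"
  have sum_nonzero: "?E0 + (?q - 1) * ?E2 = ?q * (?q ^ m * (?q - 1))"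
    using card_sum_list_nonzero_by_ratio[of "m + 2"] card_sum_list_nonzero[where 'a='a, of "m + 1"]
    by (simp add: algebra_simps)
  have shift: "?E0 - ?E2 = ?q * ?e * ?D"
    using card_ratio_vecs_0_minus_2[where 'a='a, of "m + 2"]
      sq_reps_defect_add_two[of m "of_nat (m + 2)"]
    by simp
  have "?q * ?E0 = (?E0 + (?q - 1) * ?E2) + (?q - 1) * (?E0 - ?E2)"
    by (simp add: algebra_simps)
  also have "\<dots> = ?q * (?q ^ m * (?q - 1) + (?q - 1) * ?e * ?D)"
    unfolding sum_nonzero shift by (simp add: algebra_simps)
  finally show ?thesis
    using K_eq_card_ratio_vecs[of "m + 2" F] one_less_card_field[where 'a='a] by simp
qed

lemma K_of_char_dvd:
  assumes "CHAR('a) dvd n" and "n \<ge> 2"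
  shows "int (K n (F :: 'a itself)) = int CARD('a) ^ (n - 2) * (int CARD('a) - 1)"
proof -
  obtain m where n: "n = m + 2"
    using assms(2) by (metis add.commute le_add_diff_inverse)
  have "(of_nat n :: 'a) = 0"
    using assms(1) by (simp add: of_nat_eq_0_iff_char_dvd)
  then show ?thesis
    using K_recursion[of m F, folded n] n by simp
qed

lemma K_of_odd:
  assumes "\<not> CHAR('a) dvd n" and "odd n" and "n \<ge> 2"
  shows "int (K n (F :: 'a itself)) = int CARD('a) ^ (n - 2) * (int CARD('a) - 1)
    - qchar ((- 1) ^ ((n - 1) div 2) * (of_nat n :: 'a)) * (int CARD('a) - 1)
      * int CARD('a) ^ ((n - 3) div 2)"
proof -
  have "\<exists>j. n = (2 * j + 1) + 2"
    using assms(2,3) by presburger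
  then obtain j where n: "n = (2 * j + 1) + 2" ..
  have "(of_nat n :: 'a) \<noteq> 0"
    using assms(1) by (simp add: of_nat_eq_0_iff_char_dvd)
  moreover have "n - 2 = 2 * j + 1" and "(n - 1) div 2 = Suc j" and "(n - 3) div 2 = j"
    using n by simp_all
  ultimately show ?thesis
    unfolding K_recursion[of "2 * j + 1" F, folded n] sq_reps_defect_odd[OF \<open>of_nat n \<noteq> 0\<close>]
      qchar_mult qchar_power
    by (simp add: power_mult_distrib algebra_simps)
qed

lemma K_of_even:
  assumes "\<not> CHAR('a) dvd n" and "even n" and "n \<ge> 2"
  shows "int (K n (F :: 'a itself)) = int CARD('a) ^ (n - 2) * (int CARD('a) - 1)
    + qchar ((- 1) ^ (n div 2) :: 'a) * (int CARD('a) - 1) * int CARD('a) ^ ((n - 2) div 2)"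
proof -
  have "\<exists>j. n = 2 * j + 2"
    using assms(2,3) by presburger
  then obtain j where n: "n = 2 * j + 2" ..
  have "(of_nat n :: 'a) \<noteq> 0"
    using assms(1) by (simp add: of_nat_eq_0_iff_char_dvd)
  moreover have "n - 2 = 2 * j" and "n div 2 = Suc j" and "(n - 2) div 2 = j"
    using n by simp_all
  ultimately show ?thesis
    unfolding K_recursion[of "2 * j" F, folded n] sq_reps_defect_even[OF \<open>of_nat n \<noteq> 0\<close>]
      qchar_power
    by (simp add: power_mult_distrib algebra_simps)
qed

end

theorem mainTheorem8:
  fixes n :: nat and F :: "'a::{finite,field} itself"
  defines "q \<equiv> int (card (UNIV :: 'a set))"
  assumes "odd (card (UNIV :: 'a set))" and "n \<ge> 2"
  shows "int (K n F) =
    (if CHAR('a) dvd n then q ^ (n - 2) * (q - 1)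
     else if odd n then q ^ (n - 2) * (q - 1)
        - qchar ((-1) ^ ((n - 1) div 2) * (of_nat n :: 'a)) * (q - 1) * q ^ ((n - 3) div 2)
     else q ^ (n - 2) * (q - 1)
        + qchar ((-1) ^ (n div 2) :: 'a) * (q - 1) * q ^ ((n - 2) div 2))"
proof -
  have "(2::'a) \<noteq> 0"
    using assms(2) by (rule two_neq_zero_if_odd_card)
  then show ?thesis
    unfolding q_def
    using K_of_char_dvd[of n F] K_of_odd[of n F] K_of_even[of n F] assms(3) by simp
qed

end
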